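(* Let $\Theta\subseteq\mathbb R^d$ be nonempty, closed and convex, let $f:\Theta\times\mathcal Z\to\mathbb R$ be such that $\nabla f(\cdot\,;z)$ is defined on $\Theta$ for each $z$, and suppose Assumption 2 holds with constant $B>0$. Then for any fixed (not depending on the samples) $\theta^{(0)}\in\Theta$, $t\ge0$ and $i_1,\dots,i_t\in[n]$, with probability at least $1-\delta$ over the draw of $z_1,\dots,z_n$, the projected SGD iterate satisfies $$\left|\hat F(\theta^{(t)})-F(\theta^{(t)})\right|\le\frac{Bt}{n}+B\sqrt{\frac{\log(2/\delta)}{2n}}.$$
   Context: $z_1,\dots,z_n$ are i.i.d. from a distribution $\mu$ on a sample space $\mathcal Z$, $Z\sim\mu$; $F(\theta):=\mathbb E_Z[f(\theta;Z)]$, $\hat F(\theta):=\frac1n\sum_{i=1}^nf(\theta;z_i)$. Assumption 2 (bounded deviation, constant $B$): $\sup_{z\in\mathcal Z}f(\theta;z)-\inf_{z\in\mathcal Z}f(\theta;z)\le B$ for all $\theta\in\Theta$. Projected SGD with step size $\eta>0$: $g_i(\theta):=\Pi_\Theta(\theta-\eta\nabla f(\theta;z_i))$ with $\Pi_\Theta$ the Euclidean projection, and $\theta^{(t)}:=g_{i_t}\circ\cdots\circ g_{i_1}(\theta^{(0)})$. *)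

theory Defs
  imports "HOL-Probability.Probability"
begin

definition psgd_step ::
  "'a::euclidean_space set \<Rightarrow> real \<Rightarrow> ('a \<Rightarrow> 'z \<Rightarrow> 'a) \<Rightarrow> 'z \<Rightarrow> 'a \<Rightarrow> 'a" where
  "psgd_step \<Theta> \<eta> grad z \<theta> = closest_point \<Theta> (\<theta> - \<eta> *\<^sub>R grad \<theta> z)"

definition psgd_iter ::
  "'a::euclidean_space set \<Rightarrow> real \<Rightarrow> ('a \<Rightarrow> 'z \<Rightarrow> 'a) \<Rightarrow> (nat \<Rightarrow> 'z) \<Rightarrow> nat list \<Rightarrow> 'a \<Rightarrow> 'a" where
  "psgd_iter \<Theta> \<eta> grad zs idx \<theta>0 = fold (\<lambda>i \<theta>. psgd_step \<Theta> \<eta> grad (zs i) \<theta>) idx \<theta>0"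

definition emp_risk :: "('a \<Rightarrow> 'z \<Rightarrow> real) \<Rightarrow> nat \<Rightarrow> (nat \<Rightarrow> 'z) \<Rightarrow> 'a \<Rightarrow> real" where
  "emp_risk f n zs \<theta> = (1 / real n) * (\<Sum>i=1..n. f \<theta> (zs i))"

definition pop_risk :: "'z measure \<Rightarrow> ('a \<Rightarrow> 'z \<Rightarrow> real) \<Rightarrow> 'a \<Rightarrow> real" where
  "pop_risk M f \<theta> = integral\<^sup>L M (f \<theta>)"

end

theory Submission
  imports Defs
begin

(*
  The iterate \<theta>^(t) depends only on the samples z_{i_1}, ..., z_{i_t}.  Conditionally on
  these, the remaining (at least n - t) samples are i.i.d. and independent of \<theta>^(t), so
  Hoeffding's inequality, applied to each fibre of the product of the two blocks of
  coordinates, bounds their contribution to F^ - F by B sqrt(log(2/\<delta>) / (2n)) with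
  probability at least 1 - \<delta>.  Each of the at most t other samples contributes at most B/n.
  Since f is continuous in \<theta> it is jointly measurable in (\<theta>, z), which makes all the events
  involved measurable.
*)

lemma measure_PiM_le_sections:
  fixes M :: "'i \<Rightarrow> 'a measure"
  assumes M: "\<And>i. prob_space (M i)"
    and SR: "S \<inter> R = {}" "finite S" "finite R"
    and A: "A \<in> sets (PiM (S \<union> R) M)"
    and sections: "\<And>x. x \<in> space (PiM S M) \<Longrightarrow>
      measure (PiM R M) {y \<in> space (PiM R M). merge S R (x, y) \<in> A} \<le> \<delta>"
  shows "measure (PiM (S \<union> R) M) A \<le> \<delta>"
proof -
  interpret product_sigma_finite M
    unfolding product_sigma_finite_def using M prob_space_imp_sigma_finite by blast
  interpret PS: prob_space "PiM S M" using M by (rule prob_space_PiM)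
  interpret PR: prob_space "PiM R M" using M by (rule prob_space_PiM)
  interpret P: prob_space "PiM (S \<union> R) M" using M by (rule prob_space_PiM)
  obtain x0 where "x0 \<in> space (PiM S M)" using PS.not_empty by blast
  then have \<delta>: "0 \<le> \<delta>"
    using sections measure_nonneg order_trans by blast
  have "emeasure (PiM (S \<union> R) M) A = (\<integral>\<^sup>+ z. indicator A z \<partial>PiM (S \<union> R) M)"
    using A by simp
  also have "\<dots> = (\<integral>\<^sup>+ x. \<integral>\<^sup>+ y. indicator A (merge S R (x, y)) \<partial>PiM R M \<partial>PiM S M)"
    using SR A by (intro product_nn_integral_fold) auto
  also have "\<dots> = (\<integral>\<^sup>+ x. emeasure (PiM R M) {y \<in> space (PiM R M). merge S R (x, y) \<in> A} \<partial>PiM S M)"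
  proof (rule nn_integral_cong)
    fix x assume x: "x \<in> space (PiM S M)"
    have "(\<lambda>y. merge S R (x, y)) \<in> measurable (PiM R M) (PiM (S \<union> R) M)"
      using x by measurable
    then have "{y \<in> space (PiM R M). merge S R (x, y) \<in> A} \<in> sets (PiM R M)"
      using measurable_sets[OF _ A] by (simp add: vimage_def Int_def conj_commute)
    then have "emeasure (PiM R M) {y \<in> space (PiM R M). merge S R (x, y) \<in> A}
        = (\<integral>\<^sup>+ y. indicator {y \<in> space (PiM R M). merge S R (x, y) \<in> A} y \<partial>PiM R M)"
      by simp
    then show "(\<integral>\<^sup>+ y. indicator A (merge S R (x, y)) \<partial>PiM R M)
        = emeasure (PiM R M) {y \<in> space (PiM R M). merge S R (x, y) \<in> A}"
      by (auto intro!: nn_integral_cong split: split_indicator)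
  qed
  also have "\<dots> \<le> (\<integral>\<^sup>+ x. ennreal \<delta> \<partial>PiM S M)"
    using sections by (intro nn_integral_mono) (simp add: PR.emeasure_eq_measure ennreal_leI)
  also have "\<dots> = ennreal \<delta>" by (simp add: PS.emeasure_space_1)
  finally show ?thesis
    using \<delta> by (simp add: P.emeasure_eq_measure)
qed

lemma indep_vars_PiM_components:
  fixes M :: "'i \<Rightarrow> 'a measure"
  assumes M: "\<And>i. i \<in> I \<Longrightarrow> prob_space (M i)" and I: "I \<noteq> {}"
  shows "prob_space.indep_vars (PiM I M) M (\<lambda>i x. x i) I"
proof -
  interpret P: prob_space "PiM I M" using M by (rule prob_space_PiM)
  have "distr (PiM I M) (PiM I M) (\<lambda>x. restrict x I) = distr (PiM I M) (PiM I M) (\<lambda>x. x)"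
    by (rule distr_cong) (simp_all add: space_PiM PiE_def extensional_restrict)
  also have "\<dots> = PiM I M" by (rule distr_id)
  also have "\<dots> = PiM I (\<lambda>i. distr (PiM I M) (M i) (\<lambda>x. x i))"
    by (rule PiM_cong) (simp_all add: distr_PiM_component M)
  finally show ?thesis
    by (subst P.indep_vars_iff_distr_eq_PiM'[OF I]) simp_all
qed

lemma integral_PiM_component:
  fixes g :: "'a \<Rightarrow> real"
  assumes "\<And>i. i \<in> I \<Longrightarrow> prob_space (M i)" "i \<in> I" "g \<in> borel_measurable (M i)"
  shows "(\<integral>x. g (x i) \<partial>PiM I M) = integral\<^sup>L (M i) g"
proof -
  have "integral\<^sup>L (M i) g = integral\<^sup>L (distr (PiM I M) (M i) (\<lambda>x. x i)) g"
    by (simp add: distr_PiM_component assms)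
  also have "\<dots> = (\<integral>x. g (x i) \<partial>PiM I M)"
    using assms by (intro integral_distr) simp_all
  finally show ?thesis ..
qed

lemma bounded_deviation_integrable:
  fixes g :: "'a \<Rightarrow> real"
  assumes "prob_space M" "g \<in> borel_measurable M"
    and dev: "\<And>z z'. z \<in> space M \<Longrightarrow> z' \<in> space M \<Longrightarrow> g z - g z' \<le> B"
  shows "integrable M g"
proof -
  interpret prob_space M by fact
  obtain z0 where z0: "z0 \<in> space M" using not_empty by blast
  have "AE z in M. norm (g z) \<le> \<bar>g z0\<bar> + B"
    using dev[OF _ z0] dev[OF z0] by (intro AE_I2) force
  then show ?thesis using assms(2) by (rule integrable_const_bound)
qed

lemma bounded_deviation_abs_diff_integral:
  fixes g :: "'a \<Rightarrow> real"
  assumes M: "prob_space M" and g: "g \<in> borel_measurable M"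
    and dev: "\<And>z z'. z \<in> space M \<Longrightarrow> z' \<in> space M \<Longrightarrow> g z - g z' \<le> B"
    and z: "z \<in> space M"
  shows "\<bar>g z - integral\<^sup>L M g\<bar> \<le> B"
proof -
  interpret prob_space M by fact
  have int: "integrable M g" using bounded_deviation_integrable[OF M g dev] .
  have "integral\<^sup>L M g \<le> g z + B"
    using dev[OF _ z] by (intro integral_le_const[OF int] AE_I2) force
  moreover have "g z - B \<le> integral\<^sup>L M g"
    using dev[OF z] by (intro integral_ge_const[OF int] AE_I2) force
  ultimately show ?thesis by linarith
qed

lemma prob_PiM_sum_deviation_ge:
  fixes g :: "'a \<Rightarrow> real"
  assumes M: "prob_space M" and R: "finite R" "real (card R) \<le> m"
    and g: "g \<in> borel_measurable M"
    and dev: "\<And>z z'. z \<in> space M \<Longrightarrow> z' \<in> space M \<Longrightarrow> g z - g z' \<le> B"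
    and \<epsilon>: "\<epsilon> > 0" and B: "B > 0"
  shows "measure (PiM R (\<lambda>_. M)) {y \<in> space (PiM R (\<lambda>_. M)). \<epsilon> \<le> \<bar>\<Sum>i\<in>R. g (y i) - integral\<^sup>L M g\<bar>}
           \<le> 2 * exp (-2 * \<epsilon>\<^sup>2 / (m * B\<^sup>2))"
proof (cases "R = {}")
  case True
  then show ?thesis using \<epsilon> by simp
next
  case False
  interpret M: prob_space M by (rule M)
  interpret P: prob_space "PiM R (\<lambda>_. M)" by (rule prob_space_PiM) (use M in auto)
  obtain z0 where z0: "z0 \<in> space M" using M.not_empty by blast
  define a where "a = (INF z\<in>space M. g z)"
  have bdd: "bdd_below (g ` space M)"
    by (rule bdd_belowI[of _ "g z0 - B"]) (use dev z0 in force)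
  have range: "g z \<in> {a..a + B}" if z: "z \<in> space M" for z
  proof -
    have "a \<le> g z" unfolding a_def by (rule cINF_lower[OF bdd z])
    moreover have "g z - B \<le> a" unfolding a_def
      by (rule cINF_greatest) (use M.not_empty dev z in force)+
    ultimately show ?thesis by simp
  qed
  interpret H: Hoeffding_ineq "PiM R (\<lambda>_. M)" R "\<lambda>i y. g (y i)" "\<lambda>_. a" "\<lambda>_. a + B"
     "\<Sum>i\<in>R. P.expectation (\<lambda>y. g (y i))"
  proof unfold_locales
    show "P.indep_vars (\<lambda>_. borel) (\<lambda>i y. g (y i)) R"
      by (rule P.indep_vars_compose2[OF indep_vars_PiM_components[OF M False]]) (use g in simp)
    fix i assume "i \<in> R"
    then show "AE y in PiM R (\<lambda>_. M). g (y i) \<in> {a..a + B}"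
      by (intro AE_I2 range) (auto simp: space_PiM)
  qed (simp_all add: R)
  have "(\<Sum>i\<in>R. P.expectation (\<lambda>y. g (y i))) = (\<Sum>i\<in>R. integral\<^sup>L M g)"
    by (intro sum.cong refl integral_PiM_component) (use M g in auto)
  then have "{y \<in> space (PiM R (\<lambda>_. M)). \<epsilon> \<le> \<bar>\<Sum>i\<in>R. g (y i) - integral\<^sup>L M g\<bar>}
      = {y \<in> space (PiM R (\<lambda>_. M)). \<bar>(\<Sum>i\<in>R. g (y i)) - (\<Sum>i\<in>R. P.expectation (\<lambda>y. g (y i)))\<bar> \<ge> \<epsilon>}"
    by (simp add: sum_subtractf)
  also have "P.prob \<dots> \<le> 2 * exp (-2 * \<epsilon>\<^sup>2 / (real (card R) * B\<^sup>2))"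
    using H.Hoeffding_ineq_abs_ge[of \<epsilon>] \<epsilon> B R False by (simp add: card_gt_0_iff)
  also have "\<dots> \<le> 2 * exp (-2 * \<epsilon>\<^sup>2 / (m * B\<^sup>2))"
    using R False \<epsilon> B by (simp add: card_gt_0_iff frac_le mult_right_mono)
  finally show ?thesis .
qed

lemma abs_emp_risk_diff_le:
  fixes f :: "'a \<Rightarrow> 'z \<Rightarrow> real"
  assumes n: "n > 0" and S: "S \<subseteq> {1..n}"
    and on_S: "\<And>i. i \<in> S \<Longrightarrow> \<bar>f \<theta> (zs i) - c\<bar> \<le> B"
    and off_S: "\<bar>\<Sum>i\<in>{1..n} - S. f \<theta> (zs i) - c\<bar> \<le> \<epsilon>"
  shows "\<bar>emp_risk f n zs \<theta> - c\<bar> \<le> (real (card S) * B + \<epsilon>) / real n"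
proof -
  have "emp_risk f n zs \<theta> - c = (\<Sum>i=1..n. f \<theta> (zs i) - c) / real n"
    using n by (simp add: emp_risk_def sum_subtractf field_simps)
  also have "(\<Sum>i=1..n. f \<theta> (zs i) - c)
      = (\<Sum>i\<in>S. f \<theta> (zs i) - c) + (\<Sum>i\<in>{1..n} - S. f \<theta> (zs i) - c)"
    using S by (simp add: sum.subset_diff)
  finally have "\<bar>emp_risk f n zs \<theta> - c\<bar>
      \<le> (\<bar>\<Sum>i\<in>S. f \<theta> (zs i) - c\<bar> + \<bar>\<Sum>i\<in>{1..n} - S. f \<theta> (zs i) - c\<bar>) / real n"
    by (simp add: divide_right_mono)
  also have "\<dots> \<le> (real (card S) * B + \<epsilon>) / real n"
  proof (intro divide_right_mono add_mono off_S)
    have "\<bar>\<Sum>i\<in>S. f \<theta> (zs i) - c\<bar> \<le> (\<Sum>i\<in>S. \<bar>f \<theta> (zs i) - c\<bar>)"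
      by (rule sum_abs)
    also have "\<dots> \<le> real (card S) * B"
      using on_S by (simp add: sum_bounded_above)
    finally show "\<bar>\<Sum>i\<in>S. f \<theta> (zs i) - c\<bar> \<le> real (card S) * B" .
  qed simp
  finally show ?thesis .
qed

lemma borel_measurable_sum_risk_deviation:
  fixes f :: "'a \<Rightarrow> 'z \<Rightarrow> real" and A :: "('i \<Rightarrow> 'z) \<Rightarrow> 'a"
  assumes M: "prob_space M" and A: "A \<in> measurable (PiM I (\<lambda>_. M)) N" and R: "R \<subseteq> I"
    and f: "(\<lambda>(\<theta>, z). f \<theta> z) \<in> borel_measurable (N \<Otimes>\<^sub>M M)"
  shows "(\<lambda>zs. \<Sum>i\<in>R. f (A zs) (zs i) - pop_risk M f (A zs)) \<in> borel_measurable (PiM I (\<lambda>_. M))"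
proof -
  interpret prob_space M by (rule M)
  have "(\<lambda>zs. f (A zs) (zs i)) \<in> borel_measurable (PiM I (\<lambda>_. M))" if "i \<in> I" for i
    using measurable_comp[OF measurable_Pair[OF A, of "\<lambda>zs. zs i"] f] that by (simp add: o_def)
  moreover have "pop_risk M f \<in> borel_measurable N"
    unfolding pop_risk_def[abs_def] by (rule borel_measurable_lebesgue_integral) (use f in simp)
  then have "(\<lambda>zs. pop_risk M f (A zs)) \<in> borel_measurable (PiM I (\<lambda>_. M))"
    using measurable_comp[OF A] by (simp add: o_def)
  ultimately show ?thesis
    using R by (intro borel_measurable_sum borel_measurable_diff) auto
qed

lemma prob_sum_risk_deviation_ge_of_dependence:
  fixes M :: "'z measure" and N :: "'a measure" and f :: "'a \<Rightarrow> 'z \<Rightarrow> real"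
    and A :: "('i \<Rightarrow> 'z) \<Rightarrow> 'a"
  assumes M: "prob_space M" and SR: "S \<inter> R = {}" "finite S" "finite R"
    and A: "A \<in> measurable (PiM (S \<union> R) (\<lambda>_. M)) N"
    and depends: "\<And>zs zs'. (\<And>i. i \<in> S \<Longrightarrow> zs i = zs' i) \<Longrightarrow> A zs = A zs'"
    and f: "(\<lambda>(\<theta>, z). f \<theta> z) \<in> borel_measurable (N \<Otimes>\<^sub>M M)"
    and dev: "\<And>\<theta> z z'. \<theta> \<in> space N \<Longrightarrow> z \<in> space M \<Longrightarrow> z' \<in> space M \<Longrightarrow> f \<theta> z - f \<theta> z' \<le> B"
    and \<epsilon>: "\<epsilon> > 0" and B: "B > 0" and m: "real (card R) \<le> m"
  shows "measure (PiM (S \<union> R) (\<lambda>_. M))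
           {zs \<in> space (PiM (S \<union> R) (\<lambda>_. M)). \<epsilon> \<le> \<bar>\<Sum>i\<in>R. f (A zs) (zs i) - pop_risk M f (A zs)\<bar>}
         \<le> 2 * exp (-2 * \<epsilon>\<^sup>2 / (m * B\<^sup>2))"
proof (rule measure_PiM_le_sections[OF M SR])
  show "{zs \<in> space (PiM (S \<union> R) (\<lambda>_. M)). \<epsilon> \<le> \<bar>\<Sum>i\<in>R. f (A zs) (zs i) - pop_risk M f (A zs)\<bar>}
      \<in> sets (PiM (S \<union> R) (\<lambda>_. M))"
    using borel_measurable_sum_risk_deviation[OF M A _ f, of R] by measurable
  fix x assume x: "x \<in> space (PiM S (\<lambda>_. M))"
  define \<theta> where "\<theta> = A (merge S R (x, \<lambda>_. undefined))"
  have A_merge: "A (merge S R (x, y)) = \<theta>" for y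
    unfolding \<theta>_def by (rule depends) (simp add: merge_def)
  have merge_R: "merge S R (x, y) i = y i" if "i \<in> R" for y i
    using that SR(1) by (auto simp: merge_def)
  have merge: "merge S R (x, y) \<in> space (PiM (S \<union> R) (\<lambda>_. M))" if "y \<in> space (PiM R (\<lambda>_. M))" for y
    using measurable_space[OF measurable_merge[of S R "\<lambda>_. M"], of "(x, y)"] x that
    by (simp add: space_pair_measure)
  interpret PR: prob_space "PiM R (\<lambda>_. M)" by (rule prob_space_PiM) (use M in auto)
  obtain y0 where "y0 \<in> space (PiM R (\<lambda>_. M))" using PR.not_empty by blast
  from measurable_space[OF A merge[OF this]] have \<theta>: "\<theta> \<in> space N"
    by (simp add: A_merge)
  from merge have "{y \<in> space (PiM R (\<lambda>_. M)).
        merge S R (x, y) \<in> {zs \<in> space (PiM (S \<union> R) (\<lambda>_. M)).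
          \<epsilon> \<le> \<bar>\<Sum>i\<in>R. f (A zs) (zs i) - pop_risk M f (A zs)\<bar>}}
      = {y \<in> space (PiM R (\<lambda>_. M)). \<epsilon> \<le> \<bar>\<Sum>i\<in>R. f \<theta> (y i) - integral\<^sup>L M (f \<theta>)\<bar>}"
    by (auto simp: A_merge pop_risk_def merge_R)
  also have "measure (PiM R (\<lambda>_. M)) \<dots> \<le> 2 * exp (-2 * \<epsilon>\<^sup>2 / (m * B\<^sup>2))"
    using measurable_Pair2[OF f \<theta>]
    by (intro prob_PiM_sum_deviation_ge M SR(3) m dev[OF \<theta>] \<epsilon> B) simp
  finally show "measure (PiM R (\<lambda>_. M)) {y \<in> space (PiM R (\<lambda>_. M)).
      merge S R (x, y) \<in> {zs \<in> space (PiM (S \<union> R) (\<lambda>_. M)).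
        \<epsilon> \<le> \<bar>\<Sum>i\<in>R. f (A zs) (zs i) - pop_risk M f (A zs)\<bar>}}
    \<le> 2 * exp (-2 * \<epsilon>\<^sup>2 / (m * B\<^sup>2))" .
qed

lemma generalization_bound_of_subsample_dependence:
  fixes M :: "'z measure" and N :: "'a measure" and f :: "'a \<Rightarrow> 'z \<Rightarrow> real"
    and A :: "(nat \<Rightarrow> 'z) \<Rightarrow> 'a"
  assumes M: "prob_space M"
    and A: "A \<in> measurable (PiM {1..n} (\<lambda>_. M)) N"
    and S: "S \<subseteq> {1..n}"
    and depends: "\<And>zs zs'. (\<And>i. i \<in> S \<Longrightarrow> zs i = zs' i) \<Longrightarrow> A zs = A zs'"
    and f: "(\<lambda>(\<theta>, z). f \<theta> z) \<in> borel_measurable (N \<Otimes>\<^sub>M M)"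
    and dev: "\<And>\<theta> z z'. \<theta> \<in> space N \<Longrightarrow> z \<in> space M \<Longrightarrow> z' \<in> space M \<Longrightarrow> f \<theta> z - f \<theta> z' \<le> B"
    and B: "B > 0" and n: "n > 0" and \<delta>: "0 < \<delta>" "\<delta> < 1"
  shows "\<exists>E \<in> sets (PiM {1..n} (\<lambda>_. M)).
           measure (PiM {1..n} (\<lambda>_. M)) E \<ge> 1 - \<delta> \<and>
           (\<forall>zs \<in> E. \<bar>emp_risk f n zs (A zs) - pop_risk M f (A zs)\<bar>
              \<le> B * real (card S) / real n + B * sqrt (ln (2 / \<delta>) / (2 * real n)))"
proof -
  define P where "P = PiM {1..n} (\<lambda>_. M)"
  interpret P: prob_space P unfolding P_def by (rule prob_space_PiM) (use M in auto)
  define R where "R = {1..n} - S"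
  have SR: "S \<inter> R = {}" "finite S" "finite R" "S \<union> R = {1..n}"
    using S finite_subset unfolding R_def by auto
  define L where "L = ln (2 / \<delta>)"
  define \<epsilon> where "\<epsilon> = real n * B * sqrt (L / (2 * real n))"
  have "L > 0" unfolding L_def using \<delta> by simp
  then have \<epsilon>: "\<epsilon> > 0" unfolding \<epsilon>_def using B n by simp
  have "\<epsilon>\<^sup>2 = (real n * B)\<^sup>2 * (sqrt (L / (2 * real n)))\<^sup>2"
    unfolding \<epsilon>_def by (simp only: power_mult_distrib)
  then have \<epsilon>_sq: "\<epsilon>\<^sup>2 = real n * B\<^sup>2 * L / 2"
    using \<open>L > 0\<close> n by (simp add: power2_eq_square)
  define G where "G = {zs \<in> space P. \<bar>\<Sum>i\<in>R. f (A zs) (zs i) - pop_risk M f (A zs)\<bar> < \<epsilon>}"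
  have "G \<in> sets P"
    using borel_measurable_sum_risk_deviation[OF M A _ f, of R]
    unfolding G_def P_def R_def by measurable
  moreover have "\<bar>emp_risk f n zs (A zs) - pop_risk M f (A zs)\<bar>
      \<le> B * real (card S) / real n + B * sqrt (ln (2 / \<delta>) / (2 * real n))" if "zs \<in> G" for zs
  proof -
    have "zs \<in> space P" using that by (simp add: G_def)
    then have A_zs: "A zs \<in> space N" and zs: "\<And>i. i \<in> {1..n} \<Longrightarrow> zs i \<in> space M"
      using measurable_space[OF A] by (auto simp: P_def space_PiM)
    have dev_A: "\<bar>f (A zs) z - pop_risk M f (A zs)\<bar> \<le> B" if "z \<in> space M" for z
      unfolding pop_risk_def using measurable_Pair2[OF f A_zs] dev[OF A_zs] that
      by (intro bounded_deviation_abs_diff_integral M) auto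
    have "\<bar>emp_risk f n zs (A zs) - pop_risk M f (A zs)\<bar> \<le> (real (card S) * B + \<epsilon>) / real n"
      using that S by (intro abs_emp_risk_diff_le n dev_A zs) (auto simp: G_def R_def)
    then show ?thesis
      unfolding \<epsilon>_def L_def using n by (simp add: field_simps)
  qed
  moreover have "P.prob (space P - G) \<le> \<delta>"
  proof -
    have "space P - G
        = {zs \<in> space (PiM (S \<union> R) (\<lambda>_. M)). \<epsilon> \<le> \<bar>\<Sum>i\<in>R. f (A zs) (zs i) - pop_risk M f (A zs)\<bar>}"
      by (auto simp: G_def P_def SR(4) not_less)
    also have "measure (PiM (S \<union> R) (\<lambda>_. M)) \<dots> \<le> 2 * exp (-2 * \<epsilon>\<^sup>2 / (real n * B\<^sup>2))"
      using A SR card_mono[of "{1..n}" R]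
      by (intro prob_sum_risk_deviation_ge_of_dependence[OF M SR(1-3) _ depends f dev \<epsilon> B]) auto
    also have "\<dots> = \<delta>"
      unfolding \<epsilon>_sq L_def using B n \<delta> by (simp add: exp_minus field_simps)
    finally show ?thesis by (simp add: P_def SR(4))
  qed
  then have "P.prob G \<ge> 1 - \<delta>"
    using P.prob_compl[OF \<open>G \<in> sets P\<close>] by simp
  ultimately show ?thesis
    unfolding P_def by blast
qed

text \<open>The function is the pointwise limit of the measurable functions obtained by replacing
  the parameter with the first point of a countable dense subset within distance \<open>1 / (k + 1)\<close>.\<close>

lemma borel_measurable_caratheodory:
  fixes f :: "'a::{metric_space, second_countable_topology} \<Rightarrow> 'z \<Rightarrow> real" and \<Theta> :: "'a set"
  assumes cont: "\<And>z. z \<in> space M \<Longrightarrow> continuous_on \<Theta> (\<lambda>\<theta>. f \<theta> z)"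
    and meas: "\<And>\<theta>. \<theta> \<in> \<Theta> \<Longrightarrow> f \<theta> \<in> borel_measurable M"
    and ne: "\<Theta> \<noteq> {}"
  shows "(\<lambda>(\<theta>, z). f \<theta> z) \<in> borel_measurable (restrict_space borel \<Theta> \<Otimes>\<^sub>M M)"
proof -
  obtain T where T: "countable T" "T \<subseteq> \<Theta>" "\<Theta> \<subseteq> closure T" by (rule separable)
  define d where "d = from_nat_into T"
  have "T \<noteq> {}" using T ne by auto
  then have dT: "d j \<in> T" for j by (simp add: d_def from_nat_into)
  define J where "J k \<theta> = (LEAST j. dist \<theta> (d j) < 1 / Suc k)" for k :: nat and \<theta>
  have J: "dist \<theta> (d (J k \<theta>)) < 1 / Suc k" if "\<theta> \<in> \<Theta>" for \<theta> k
  proof -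
    have "\<theta> \<in> closure T" using that T by auto
    then obtain t where "t \<in> T" "dist t \<theta> < 1 / Suc k"
      by (meson closure_approachable of_nat_0_less_iff zero_less_Suc divide_pos_pos zero_less_one)
    moreover obtain j where "t = d j" using \<open>t \<in> T\<close> T(1) unfolding d_def
      by (metis from_nat_into_surj)
    ultimately have "\<exists>j. dist \<theta> (d j) < 1 / Suc k" by (auto simp: dist_commute)
    then show ?thesis unfolding J_def by (rule LeastI_ex)
  qed
  let ?N = "restrict_space borel \<Theta> \<Otimes>\<^sub>M M"
  define h where "h k p = f (d (J k (fst p))) (snd p)" for k p
  have "h k \<in> borel_measurable ?N" for k
  proof -
    have "(\<lambda>p. f (d j) (snd p)) \<in> borel_measurable ?N" for j
      using meas[of "d j"] dT T(2) by (auto intro: measurable_snd'')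
    moreover have "(\<lambda>p. J k (fst p)) \<in> measurable ?N (count_space UNIV)"
    proof -
      have fst: "fst \<in> borel_measurable ?N"
        using measurable_fst measurable_restrict_space2_iff
        by (metis measurable_comp measurable_restrict_space1 measurable_ident_sets)
      show ?thesis unfolding J_def by (intro measurable_Least) (use fst in measurable)
    qed
    ultimately show ?thesis unfolding h_def
      by (rule measurable_compose_countable)
  qed
  then show ?thesis
  proof (rule borel_measurable_LIMSEQ_metric)
    fix p assume "p \<in> space ?N"
    then have \<theta>: "fst p \<in> \<Theta>" and z: "snd p \<in> space M"
      by (auto simp: space_pair_measure space_restrict_space)
    have "(\<lambda>k. d (J k (fst p))) \<longlonglongrightarrow> fst p"
    proof (rule metric_LIMSEQ_I)
      fix r :: real assume "0 < r"
      then obtain N where N: "inverse (real (Suc N)) < r" using reals_Archimedean by blast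
      have "dist (d (J k (fst p))) (fst p) < r" if "N \<le> k" for k
      proof -
        have "1 / real (Suc k) \<le> inverse (real (Suc N))"
          using that by (simp add: divide_inverse inverse_le_imp_le frac_le)
        then show ?thesis using J[OF \<theta>, of k] N by (simp add: dist_commute)
      qed
      then show "\<exists>no. \<forall>k\<ge>no. dist (d (J k (fst p))) (fst p) < r" by blast
    qed
    then have "(\<lambda>k. f (d (J k (fst p))) (snd p)) \<longlonglongrightarrow> f (fst p) (snd p)"
      by (rule continuous_on_tendsto_compose[OF cont[OF z] _ \<theta>])
        (use dT T(2) in \<open>auto intro!: always_eventually\<close>)
    then show "(\<lambda>k. h k p) \<longlonglongrightarrow> (\<lambda>(\<theta>, z). f \<theta> z) p"
      by (simp add: h_def case_prod_beta)
  qed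
qed

lemma psgd_iter_cong:
  assumes "\<And>i. i \<in> set idx \<Longrightarrow> zs i = zs' i"
  shows "psgd_iter \<Theta> \<eta> grad zs idx \<theta>0 = psgd_iter \<Theta> \<eta> grad zs' idx \<theta>0"
  unfolding psgd_iter_def by (rule fold_cong) (use assms in auto)

lemma measurable_fold_psgd_step:
  fixes \<Theta> :: "'a::euclidean_space set" and grad :: "'a \<Rightarrow> 'z \<Rightarrow> 'a"
  assumes \<Theta>: "closed \<Theta>" "\<Theta> \<noteq> {}" "convex \<Theta>"
    and grad: "(\<lambda>(\<theta>, z). grad \<theta> z) \<in> borel_measurable (restrict_space borel \<Theta> \<Otimes>\<^sub>M M)"
    and idx: "set idx \<subseteq> I"
    and h: "h \<in> measurable (PiM I (\<lambda>_. M)) (restrict_space borel \<Theta>)"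
  shows "(\<lambda>zs. fold (\<lambda>i \<theta>. psgd_step \<Theta> \<eta> grad (zs i) \<theta>) idx (h zs))
           \<in> measurable (PiM I (\<lambda>_. M)) (restrict_space borel \<Theta>)"
  using idx h
proof (induction idx arbitrary: h)
  case (Cons i idx)
  let ?P = "PiM I (\<lambda>_. M)"
  have "(\<lambda>zs. (h zs, zs i)) \<in> measurable ?P (restrict_space borel \<Theta> \<Otimes>\<^sub>M M)"
    using Cons.prems by (intro measurable_Pair) auto
  from measurable_comp[OF this grad]
  have "(\<lambda>zs. grad (h zs) (zs i)) \<in> borel_measurable ?P" by (simp add: o_def)
  moreover have "h \<in> borel_measurable ?P"
    using Cons.prems(2) measurable_restrict_space2_iff by blast
  ultimately have "(\<lambda>zs. h zs - \<eta> *\<^sub>R grad (h zs) (zs i)) \<in> borel_measurable ?P"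
    by measurable
  then have "(\<lambda>zs. psgd_step \<Theta> \<eta> grad (zs i) (h zs)) \<in> borel_measurable ?P"
    unfolding psgd_step_def
    by (rule borel_measurable_continuous_on[OF continuous_on_closest_point[OF \<Theta>(3,1,2)]])
  then have "(\<lambda>zs. psgd_step \<Theta> \<eta> grad (zs i) (h zs)) \<in> measurable ?P (restrict_space borel \<Theta>)"
    by (intro measurable_restrict_space2) (use closest_point_in_set[OF \<Theta>(1,2)] in \<open>auto simp: psgd_step_def\<close>)
  with Cons show ?case by simp
qed simp

lemma measurable_psgd_iter:
  fixes \<Theta> :: "'a::euclidean_space set" and grad :: "'a \<Rightarrow> 'z \<Rightarrow> 'a"
  assumes "closed \<Theta>" "\<Theta> \<noteq> {}" "convex \<Theta>"
    and "(\<lambda>(\<theta>, z). grad \<theta> z) \<in> borel_measurable (restrict_space borel \<Theta> \<Otimes>\<^sub>M M)"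
    and "set idx \<subseteq> I" "\<theta>0 \<in> \<Theta>"
  shows "(\<lambda>zs. psgd_iter \<Theta> \<eta> grad zs idx \<theta>0) \<in> measurable (PiM I (\<lambda>_. M)) (restrict_space borel \<Theta>)"
  unfolding psgd_iter_def
  using measurable_fold_psgd_step[OF assms(1-5), of "\<lambda>_. \<theta>0"] assms(6)
  by (simp add: space_restrict_space)

theorem corollary2:
  fixes \<Theta> :: "'a::euclidean_space set"
    and M :: "'z measure"
    and f :: "'a \<Rightarrow> 'z \<Rightarrow> real"
    and grad :: "'a \<Rightarrow> 'z \<Rightarrow> 'a"
    and B \<eta> \<delta> :: real and n :: nat and idx :: "nat list" and \<theta>0 :: 'a
  assumes "prob_space M"
    and "\<Theta> \<noteq> {}" and "closed \<Theta>" and "convex \<Theta>"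
    and "\<And>\<theta>. \<theta> \<in> \<Theta> \<Longrightarrow> f \<theta> \<in> borel_measurable M"
    and "\<And>z \<theta>. z \<in> space M \<Longrightarrow> \<theta> \<in> \<Theta> \<Longrightarrow>
           ((\<lambda>x. f x z) has_derivative (\<lambda>h. grad \<theta> z \<bullet> h)) (at \<theta> within \<Theta>)"
    and "(\<lambda>(x, z). grad x z) \<in> borel_measurable (restrict_space borel \<Theta> \<Otimes>\<^sub>M M)"
    and "B > 0"
    and "\<And>\<theta> z z'. \<theta> \<in> \<Theta> \<Longrightarrow> z \<in> space M \<Longrightarrow> z' \<in> space M \<Longrightarrow> f \<theta> z - f \<theta> z' \<le> B"
    and "\<eta> > 0" and "n > 0" and "0 < \<delta>" and "\<delta> < 1"
    and "\<theta>0 \<in> \<Theta>" and "set idx \<subseteq> {1..n}"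
  shows "\<exists>E \<in> sets (PiM {1..n} (\<lambda>_. M)).
           measure (PiM {1..n} (\<lambda>_. M)) E \<ge> 1 - \<delta> \<and>
           (\<forall>zs \<in> E.
              \<bar>emp_risk f n zs (psgd_iter \<Theta> \<eta> grad zs idx \<theta>0)
               - pop_risk M f (psgd_iter \<Theta> \<eta> grad zs idx \<theta>0)\<bar>
              \<le> B * real (length idx) / real n + B * sqrt (ln (2 / \<delta>) / (2 * real n)))"
proof -
  let ?\<theta> = "\<lambda>zs. psgd_iter \<Theta> \<eta> grad zs idx \<theta>0"
  have "continuous_on \<Theta> (\<lambda>\<theta>. f \<theta> z)" if "z \<in> space M" for z
    unfolding continuous_on_eq_continuous_within
    using has_derivative_continuous[OF assms(6)[OF that]] by blast
  then have f: "(\<lambda>(\<theta>, z). f \<theta> z) \<in> borel_measurable (restrict_space borel \<Theta> \<Otimes>\<^sub>M M)"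
    using borel_measurable_caratheodory assms(2,5) by blast
  have "?\<theta> \<in> measurable (PiM {1..n} (\<lambda>_. M)) (restrict_space borel \<Theta>)"
    using assms by (intro measurable_psgd_iter) auto
  then have "\<exists>E \<in> sets (PiM {1..n} (\<lambda>_. M)). measure (PiM {1..n} (\<lambda>_. M)) E \<ge> 1 - \<delta> \<and>
      (\<forall>zs \<in> E. \<bar>emp_risk f n zs (?\<theta> zs) - pop_risk M f (?\<theta> zs)\<bar>
        \<le> B * real (card (set idx)) / real n + B * sqrt (ln (2 / \<delta>) / (2 * real n)))"
    using assms(8-13)
    by (intro generalization_bound_of_subsample_dependence[OF assms(1) _ assms(15) psgd_iter_cong f])
      (auto simp: space_restrict_space)
  then obtain E where "E \<in> sets (PiM {1..n} (\<lambda>_. M))" "measure (PiM {1..n} (\<lambda>_. M)) E \<ge> 1 - \<delta>"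
    and "\<And>zs. zs \<in> E \<Longrightarrow> \<bar>emp_risk f n zs (?\<theta> zs) - pop_risk M f (?\<theta> zs)\<bar>
        \<le> B * real (card (set idx)) / real n + B * sqrt (ln (2 / \<delta>) / (2 * real n))"
    by blast
  moreover have "B * real (card (set idx)) / real n \<le> B * real (length idx) / real n"
    using assms(8) card_length[of idx] by (simp add: divide_right_mono)
  ultimately show ?thesis
    by (meson add_mono order_refl order_trans)
qed

end
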